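(* Let $p$ be such that $p^*=\frac{p}{p-1}>0$, let $\alpha\in\mathbb{R}\setminus[1,2]$, and let $x_0\in(0,\infty)$. Set $a=\frac{\alpha-1}{(\alpha-2)p^*}$, $$K=\frac{a_{p,1}}{p^*}|\alpha-2|^{\frac{1}{\alpha-2}},\qquad s_0=K\,\Gamma\big(a,x_0^{p^*}\big).$$ Then the up transform of $g_{p,1}$, computed with the change of variable $s(x)=\int_x^{x_0}|(\alpha-2)v|^{\frac1{\alpha-2}}g_{p,1}(v)\,dv$, is $$\mathcal{U}_\alpha[g_{p,1}](s)=|\alpha-2|^{\frac{1}{2-\alpha}}\left|\Gamma^{-1}\!\left(a,\frac{s+s_0}{K}\right)\right|^{\frac{1}{p^*(2-\alpha)}}.$$
   Context: $g_{p,1}(x)=a_{p,1}e^{-x^{p^*}}$ for $x\in[0,\infty)$, with $a_{p,1}=\frac{p^*}{2\Gamma(1/p^* )}$ (the restriction to the half-line of the symmetric stretched Gaussian). $\Gamma(a,z)=\int_z^\infty w^{a-1}e^{-w}\,dw$ is the upper incomplete Gamma function and $\Gamma^{-1}(a,\cdot)$ denotes its inverse with respect to the second argument. Up transform: for $\alpha\ne2$, $\mathcal{U}_\alpha[f](s)=|(\alpha-2)x(s)|^{1/(2-\alpha)}$, where $x(s)$ is the inverse of the change of variable $s(x)$ (satisfying $s'(x)=-|(\alpha-2)x|^{1/(\alpha-2)}f(x)$). *)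

theory Defs
  imports "HOL-Analysis.Analysis"
begin

definition pstar :: "real \<Rightarrow> real" where
  "pstar p = p / (p - 1)"

definition a_p1 :: "real \<Rightarrow> real" where
  "a_p1 p = pstar p / (2 * Gamma (1 / pstar p))"

definition g_p1 :: "real \<Rightarrow> real \<Rightarrow> real" where
  "g_p1 p x = a_p1 p * exp (- (x powr pstar p))"

definition upper_inc_Gamma :: "real \<Rightarrow> real \<Rightarrow> real" where
  "upper_inc_Gamma a z = (LBINT w=ereal z..\<infinity>. w powr (a - 1) * exp (- w))"

definition inv_upper_inc_Gamma :: "real \<Rightarrow> real \<Rightarrow> real" where
  "inv_upper_inc_Gamma a y = (THE z. 0 \<le> z \<and> upper_inc_Gamma a z = y)"

definition up_cov :: "real \<Rightarrow> real \<Rightarrow> (real \<Rightarrow> real) \<Rightarrow> real \<Rightarrow> real" where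
  "up_cov \<alpha> x0 f x = (LBINT v=ereal x..ereal x0. \<bar>(\<alpha> - 2) * v\<bar> powr (1 / (\<alpha> - 2)) * f v)"

definition up_inv_cov :: "real \<Rightarrow> real \<Rightarrow> (real \<Rightarrow> real) \<Rightarrow> real \<Rightarrow> real" where
  "up_inv_cov \<alpha> x0 f s = (THE x. 0 < x \<and> up_cov \<alpha> x0 f x = s)"

definition up_transform :: "real \<Rightarrow> real \<Rightarrow> (real \<Rightarrow> real) \<Rightarrow> real \<Rightarrow> real" where
  "up_transform \<alpha> x0 f s = \<bar>(\<alpha> - 2) * up_inv_cov \<alpha> x0 f s\<bar> powr (1 / (2 - \<alpha>))"

end

theory Submission
  imports Defs
begin

text \<open>For \<open>f v = A exp (- v powr q)\<close>, the substitution \<open>w = v powr q\<close> turns the integrand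
  \<open>\<bar>(\<alpha> - 2) v\<bar> powr (1 / (\<alpha> - 2)) f v dv\<close> of the change of variable into
  \<open>K w powr (a - 1) exp (- w) dw\<close>, because \<open>q a - 1 = 1 / (\<alpha> - 2)\<close>; hence
  \<open>s x = K (\<Gamma>(a, x powr q) - \<Gamma>(a, x0 powr q))\<close>. The condition \<open>\<alpha> \<notin> [1, 2]\<close> is exactly
  \<open>a > 0\<close>, which makes \<open>\<Gamma>(a, -)\<close> finite and strictly decreasing on \<open>[0, \<infinity>)\<close>. So \<open>s\<close>
  is injective, \<open>x(s) powr q = \<Gamma>\<inverse>(a, (s + s0) / K)\<close>, and raising this to the power
  \<open>1 / (q (2 - \<alpha>))\<close> gives the up transform.\<close>

lemma set_integrable_Gamma_integrand:
  fixes a :: real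
  assumes "a > 0"
  shows "set_integrable lborel {0<..} (\<lambda>w. w powr (a - 1) * exp (- w))"
proof -
  have "((\<lambda>w. w powr (a - 1) / exp w) has_integral Gamma a) {0..}"
    using Gamma_integral_real[OF assms] .
  then have "(\<lambda>w. w powr (a - 1) * exp (- w)) integrable_on {0..}"
    by (auto simp: exp_minus field_simps integrable_on_def)
  then have "(\<lambda>w. w powr (a - 1) * exp (- w)) absolutely_integrable_on {0..}"
    by (rule nonnegative_absolutely_integrable) auto
  then have "(\<lambda>w. w powr (a - 1) * exp (- w)) absolutely_integrable_on {0<..}"
    by (rule set_integrable_subset) auto
  then show ?thesis
    unfolding set_integrable_def by (subst (asm) integrable_completion) auto
qed

lemma upper_inc_Gamma_split:
  fixes a c d :: real
  assumes "a > 0" "c \<ge> 0" "d \<ge> 0"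
  shows "upper_inc_Gamma a c
    = (LBINT w=ereal c..ereal d. w powr (a - 1) * exp (- w)) + upper_inc_Gamma a d"
proof -
  have "set_integrable lborel {min c d<..} (\<lambda>w. w powr (a - 1) * exp (- w))"
    by (rule set_integrable_subset[OF set_integrable_Gamma_integrand[OF \<open>a > 0\<close>]])
      (use assms in auto)
  moreover have "{x. min (ereal c) (ereal d) < ereal x} = {min c d<..}"
    by (auto simp: min_def)
  ultimately have "interval_lebesgue_integrable lborel
      (min (ereal c) (min (ereal d) \<infinity>)) (max (ereal c) (max (ereal d) \<infinity>))
      (\<lambda>w. w powr (a - 1) * exp (- w))"
    by (simp add: interval_lebesgue_integrable_def einterval_def)
  from interval_integral_sum[OF this] show ?thesis
    unfolding upper_inc_Gamma_def by simp
qed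

lemma interval_integral_Gamma_integrand_nonneg:
  fixes a c d :: real
  assumes "c \<le> d"
  shows "(LBINT w=ereal c..ereal d. w powr (a - 1) * exp (- w)) \<ge> 0"
  using assms unfolding interval_lebesgue_integral_def set_lebesgue_integral_def
  by (auto intro!: integral_nonneg simp: indicator_def)

lemma interval_integral_Gamma_integrand_pos:
  fixes a c d :: real
  assumes "a > 0" "0 < c" "c < d"
  shows "(LBINT w=ereal c..ereal d. w powr (a - 1) * exp (- w)) > 0"
proof -
  have "set_integrable lborel {c..d} (\<lambda>w. w powr (a - 1) * exp (- w))"
    by (rule set_integrable_subset[OF set_integrable_Gamma_integrand[OF \<open>a > 0\<close>]])
      (use assms in auto)
  then have "(LBINT w=ereal c..ereal d. w powr (a - 1) * exp (- w))
      = integral {c..d} (\<lambda>w. w powr (a - 1) * exp (- w))"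
    using assms by (simp add: interval_integral_Icc set_borel_integral_eq_integral(2))
  also have "integral {c..d} (\<lambda>_. 0) < \<dots>"
    by (rule integral_less_real) (use assms in \<open>auto intro!: continuous_intros\<close>)
  finally show ?thesis by simp
qed

lemma upper_inc_Gamma_strict_antimono:
  fixes a u v :: real
  assumes "a > 0" "0 \<le> u" "u < v"
  shows "upper_inc_Gamma a v < upper_inc_Gamma a u"
proof -
  define m where "m = (u + v) / 2"
  have m: "0 < m" "u < m" "m < v" using assms by (auto simp: m_def)
  have "upper_inc_Gamma a v < (LBINT w=ereal m..ereal v. w powr (a - 1) * exp (- w))
      + upper_inc_Gamma a v"
    using interval_integral_Gamma_integrand_pos[OF \<open>a > 0\<close> m(1,3)] by simp
  also have "\<dots> = upper_inc_Gamma a m"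
    using upper_inc_Gamma_split[OF \<open>a > 0\<close>, of m v] m by simp
  also have "\<dots> \<le> upper_inc_Gamma a u"
    using upper_inc_Gamma_split[OF \<open>a > 0\<close>, of u m]
      interval_integral_Gamma_integrand_nonneg[of u m a] assms m by simp
  finally show ?thesis .
qed

lemma inj_on_upper_inc_Gamma:
  fixes a :: real
  assumes "a > 0"
  shows "inj_on (upper_inc_Gamma a) {0..}"
proof (rule linorder_inj_onI')
  fix u v :: real
  assume "u \<in> {0..}" "v \<in> {0..}" "u < v"
  then show "upper_inc_Gamma a u \<noteq> upper_inc_Gamma a v"
    using upper_inc_Gamma_strict_antimono[OF assms, of u v] by simp
qed

lemma inv_upper_inc_Gamma_upper_inc_Gamma:
  fixes a z :: real
  assumes "a > 0" "z \<ge> 0"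
  shows "inv_upper_inc_Gamma a (upper_inc_Gamma a z) = z"
  unfolding inv_upper_inc_Gamma_def
  by (rule the_equality) (use assms inj_on_upper_inc_Gamma[OF \<open>a > 0\<close>] in \<open>auto dest: inj_onD\<close>)

lemma up_inv_cov_up_cov:
  assumes "inj_on (up_cov \<alpha> x0 f) {0<..}" "x > 0"
  shows "up_inv_cov \<alpha> x0 f (up_cov \<alpha> x0 f x) = x"
  unfolding up_inv_cov_def
  by (rule the_equality) (use assms in \<open>auto dest: inj_onD\<close>)

lemma up_cov_integrand_stretched_exp:
  fixes q \<alpha> a A K t :: real
  assumes "q > 0" "\<alpha> \<noteq> 2" "t > 0"
    and a: "a = (\<alpha> - 1) / ((\<alpha> - 2) * q)"
    and K: "K = A / q * \<bar>\<alpha> - 2\<bar> powr (1 / (\<alpha> - 2))"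
  shows "\<bar>(\<alpha> - 2) * t\<bar> powr (1 / (\<alpha> - 2)) * (A * exp (- (t powr q)))
    = (q * t powr (q - 1)) *\<^sub>R (K * ((t powr q) powr (a - 1) * exp (- (t powr q))))"
proof -
  have "(q - 1) + q * (a - 1) = q * a - 1"
    by (simp add: algebra_simps)
  also have "\<dots> = 1 / (\<alpha> - 2)"
    using assms(1,2) unfolding a by (simp add: field_simps)
  finally have "t powr (q - 1) * (t powr q) powr (a - 1) = t powr (1 / (\<alpha> - 2))"
    using \<open>t > 0\<close> by (simp add: powr_powr powr_add [symmetric])
  moreover have "\<bar>(\<alpha> - 2) * t\<bar> powr (1 / (\<alpha> - 2))
      = \<bar>\<alpha> - 2\<bar> powr (1 / (\<alpha> - 2)) * t powr (1 / (\<alpha> - 2))"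
    using \<open>t > 0\<close> by (simp add: abs_mult powr_mult)
  ultimately show ?thesis
    using \<open>q > 0\<close> unfolding K by (simp add: field_simps)
qed

lemma interval_integral_up_cov_integrand_stretched_exp:
  fixes q \<alpha> a A K u v :: real
  assumes "q > 0" "\<alpha> \<noteq> 2" "0 < u" "u \<le> v"
    and a: "a = (\<alpha> - 1) / ((\<alpha> - 2) * q)"
    and K: "K = A / q * \<bar>\<alpha> - 2\<bar> powr (1 / (\<alpha> - 2))"
  shows "(LBINT t=ereal u..ereal v. \<bar>(\<alpha> - 2) * t\<bar> powr (1 / (\<alpha> - 2)) * (A * exp (- (t powr q))))
    = K * (LBINT w=ereal (u powr q)..ereal (v powr q). w powr (a - 1) * exp (- w))"
proof -
  have "(LBINT t=ereal u..ereal v. \<bar>(\<alpha> - 2) * t\<bar> powr (1 / (\<alpha> - 2)) * (A * exp (- (t powr q))))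
      = (LBINT t=ereal u..ereal v.
          (q * t powr (q - 1)) *\<^sub>R (K * ((t powr q) powr (a - 1) * exp (- (t powr q)))))"
    using assms by (intro interval_integral_cong up_cov_integrand_stretched_exp)
      (auto simp: einterval_iff)
  also have "\<dots> = (LBINT w=ereal (u powr q)..ereal (v powr q). K * (w powr (a - 1) * exp (- w)))"
  proof (rule interval_integral_substitution_finite[OF \<open>u \<le> v\<close>])
    show "((\<lambda>t. t powr q) has_real_derivative q * t powr (q - 1)) (at t within {u..v})"
      if "u \<le> t" "t \<le> v" for t
      using that \<open>0 < u\<close> by (auto intro!: has_field_derivative_at_within has_real_derivative_powr)
    have "continuous_on {0<..} (\<lambda>w. K * (w powr (a - 1) * exp (- w)))"
      by (auto intro!: continuous_intros)
    then show "continuous_on ((\<lambda>t. t powr q) ` {u..v}) (\<lambda>w. K * (w powr (a - 1) * exp (- w)))"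
      by (rule continuous_on_subset) (use \<open>0 < u\<close> in auto)
    show "continuous_on {u..v} (\<lambda>t. q * t powr (q - 1))"
      using \<open>0 < u\<close> by (auto intro!: continuous_intros)
  qed
  finally show ?thesis
    by simp
qed

lemma up_cov_stretched_exp:
  fixes q \<alpha> a A K x0 x :: real
  assumes "q > 0" "a > 0" "0 < x0" "0 < x"
    and a: "a = (\<alpha> - 1) / ((\<alpha> - 2) * q)"
    and K: "K = A / q * \<bar>\<alpha> - 2\<bar> powr (1 / (\<alpha> - 2))"
  shows "up_cov \<alpha> x0 (\<lambda>v. A * exp (- (v powr q))) x
    = K * (upper_inc_Gamma a (x powr q) - upper_inc_Gamma a (x0 powr q))"
proof -
  have "\<alpha> \<noteq> 2"
    using \<open>a > 0\<close> unfolding a by auto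
  note substitution = interval_integral_up_cov_integrand_stretched_exp[OF \<open>q > 0\<close> \<open>\<alpha> \<noteq> 2\<close> _ _ a K]
  show ?thesis
  proof (cases "x \<le> x0")
    case True
    then show ?thesis
      using substitution[OF \<open>0 < x\<close> True] upper_inc_Gamma_split[OF \<open>a > 0\<close>, of "x powr q" "x0 powr q"]
      unfolding up_cov_def by simp
  next
    case False
    then show ?thesis
      using substitution[OF \<open>0 < x0\<close>, of x] upper_inc_Gamma_split[OF \<open>a > 0\<close>, of "x0 powr q" "x powr q"]
      unfolding up_cov_def by (subst interval_integral_endpoints_reverse) (simp add: algebra_simps)
  qed
qed

lemma inj_on_up_cov_stretched_exp:
  fixes q \<alpha> a A x0 :: real
  assumes "q > 0" "a > 0" "A > 0" "0 < x0"
    and a: "a = (\<alpha> - 1) / ((\<alpha> - 2) * q)"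
  shows "inj_on (up_cov \<alpha> x0 (\<lambda>v. A * exp (- (v powr q)))) {0<..}"
proof (rule inj_onI)
  define K where "K = A / q * \<bar>\<alpha> - 2\<bar> powr (1 / (\<alpha> - 2))"
  have "\<alpha> \<noteq> 2"
    using \<open>a > 0\<close> unfolding a by auto
  then have "K \<noteq> 0"
    using assms(1,3) unfolding K_def by simp
  fix x y :: real
  assume "x \<in> {0<..}" "y \<in> {0<..}"
    and "up_cov \<alpha> x0 (\<lambda>v. A * exp (- (v powr q))) x = up_cov \<alpha> x0 (\<lambda>v. A * exp (- (v powr q))) y"
  then have "upper_inc_Gamma a (x powr q) = upper_inc_Gamma a (y powr q)"
    using up_cov_stretched_exp[OF assms(1,2,4) _ a K_def] \<open>K \<noteq> 0\<close> by simp
  then have "x powr q = y powr q"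
    using inj_on_upper_inc_Gamma[OF \<open>a > 0\<close>] by (auto dest: inj_onD)
  then have "(x powr q) powr (1 / q) = (y powr q) powr (1 / q)"
    by simp
  then show "x = y"
    using \<open>q > 0\<close> \<open>x \<in> {0<..}\<close> \<open>y \<in> {0<..}\<close> by (simp add: powr_powr)
qed

lemma up_transform_stretched_exp:
  fixes q \<alpha> a A K x0 x :: real
  assumes "q > 0" "a > 0" "A > 0" "0 < x0" "0 < x"
    and a: "a = (\<alpha> - 1) / ((\<alpha> - 2) * q)"
    and K: "K = A / q * \<bar>\<alpha> - 2\<bar> powr (1 / (\<alpha> - 2))"
  defines "s \<equiv> up_cov \<alpha> x0 (\<lambda>v. A * exp (- (v powr q))) x"
  shows "up_transform \<alpha> x0 (\<lambda>v. A * exp (- (v powr q))) s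
    = \<bar>\<alpha> - 2\<bar> powr (1 / (2 - \<alpha>))
      * \<bar>inv_upper_inc_Gamma a ((s + K * upper_inc_Gamma a (x0 powr q)) / K)\<bar> powr (1 / (q * (2 - \<alpha>)))"
proof -
  have "\<alpha> \<noteq> 2"
    using \<open>a > 0\<close> unfolding a by auto
  then have "K \<noteq> 0"
    using assms(1,3) unfolding K by simp
  have "s = K * (upper_inc_Gamma a (x powr q) - upper_inc_Gamma a (x0 powr q))"
    unfolding s_def by (rule up_cov_stretched_exp[OF assms(1,2,4,5) a K])
  then have "(s + K * upper_inc_Gamma a (x0 powr q)) / K = upper_inc_Gamma a (x powr q)"
    using \<open>K \<noteq> 0\<close> by (simp add: field_simps)
  then have "inv_upper_inc_Gamma a ((s + K * upper_inc_Gamma a (x0 powr q)) / K) = x powr q"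
    using inv_upper_inc_Gamma_upper_inc_Gamma[OF \<open>a > 0\<close>] by simp
  moreover have "\<bar>x powr q\<bar> powr (1 / (q * (2 - \<alpha>))) = x powr (1 / (2 - \<alpha>))"
    using \<open>q > 0\<close> by (simp add: powr_powr)
  moreover have "up_inv_cov \<alpha> x0 (\<lambda>v. A * exp (- (v powr q))) s = x"
    unfolding s_def
    by (rule up_inv_cov_up_cov[OF inj_on_up_cov_stretched_exp[OF assms(1-4) a] \<open>0 < x\<close>])
  ultimately show ?thesis
    unfolding up_transform_def using \<open>0 < x\<close> by (simp add: abs_mult powr_mult)
qed

theorem proposition11:
  fixes p \<alpha> x0 :: real
  assumes hp: "pstar p > 0"
    and h\<alpha>: "\<alpha> \<notin> {1..2}"
    and hx0: "x0 > 0"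
  shows "\<forall>s \<in> up_cov \<alpha> x0 (g_p1 p) ` {0<..}.
    up_transform \<alpha> x0 (g_p1 p) s =
      \<bar>\<alpha> - 2\<bar> powr (1 / (2 - \<alpha>)) *
      \<bar>inv_upper_inc_Gamma ((\<alpha> - 1) / ((\<alpha> - 2) * pstar p))
          ((s + (a_p1 p / pstar p) * \<bar>\<alpha> - 2\<bar> powr (1 / (\<alpha> - 2))
                 * upper_inc_Gamma ((\<alpha> - 1) / ((\<alpha> - 2) * pstar p)) (x0 powr pstar p))
           / ((a_p1 p / pstar p) * \<bar>\<alpha> - 2\<bar> powr (1 / (\<alpha> - 2))))\<bar>
        powr (1 / (pstar p * (2 - \<alpha>)))"
proof -
  have "(\<alpha> - 1) / (\<alpha> - 2) > 0"
    using h\<alpha> by (auto simp: zero_less_divide_iff)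
  then have a_pos: "(\<alpha> - 1) / ((\<alpha> - 2) * pstar p) > 0"
    using hp by (metis divide_divide_eq_left divide_pos_pos)
  have A_pos: "a_p1 p > 0"
    using hp unfolding a_p1_def by simp
  show ?thesis
    unfolding g_p1_def [abs_def]
    using up_transform_stretched_exp[OF hp a_pos A_pos hx0 _ refl refl] by blast
qed

end
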